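(* Let $f:[0,1]\to\mathbb{R}$ with $f(0),f(1)\in\mathbb{Z}$. (a) If $f(x)-x$ is monotone increasing on $[0,1]$, then $\widetilde{B}_n(f)$ and $\widehat{B}_n(f)$ are monotone increasing on $[0,1]$ for all $n\in\mathbb{N}_+$. (b) If $f(x)+x$ is monotone decreasing on $[0,1]$, then $\widetilde{B}_n(f)$ and $\widehat{B}_n(f)$ are monotone decreasing on $[0,1]$ for all $n\in\mathbb{N}_+$.
   Context: For $n\in\mathbb{N}_+$ and $f:[0,1]\to\mathbb{R}$, define $\widetilde{B}_n(f)(x):=\sum_{k=0}^n \left[f\left(\frac{k}{n}\right)\binom{n}{k}\right]x^k(1-x)^{n-k}$, where $[\alpha]$ is the largest integer $\le\alpha$, and $\widehat{B}_n(f)(x):=\sum_{k=0}^n \left\langle f\left(\frac{k}{n}\right)\binom{n}{k}\right\rangle x^k(1-x)^{n-k}$, where $\langle\alpha\rangle$ is the integer nearest to $\alpha$ (when $\alpha$ is a half-integer, $\langle\alpha\rangle$ may be either neighbouring integer, chosen arbitrarily; the result holds for any such choice). Monotone increasing/decreasing are meant in the non-strict sense. *)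

theory Defs
  imports "HOL-Analysis.Analysis"
begin

definition Btilde :: "nat \<Rightarrow> (real \<Rightarrow> real) \<Rightarrow> real \<Rightarrow> real" where
  "Btilde n f x = (\<Sum>k\<le>n. real_of_int \<lfloor>f (real k / real n) * real (n choose k)\<rfloor> * x ^ k * (1 - x) ^ (n - k))"

text \<open>Integer Bernstein polynomial with nearest-integer rounding, given by an arbitrary
  rounding function rnd that picks a nearest integer (at half-integers either neighbour).\<close>
definition Bhat :: "(real \<Rightarrow> int) \<Rightarrow> nat \<Rightarrow> (real \<Rightarrow> real) \<Rightarrow> real \<Rightarrow> real" where
  "Bhat rnd n f x = (\<Sum>k\<le>n. real_of_int (rnd (f (real k / real n) * real (n choose k))) * x ^ k * (1 - x) ^ (n - k))"

definition nearest_int_rounding :: "(real \<Rightarrow> int) \<Rightarrow> bool" where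
  "nearest_int_rounding rnd \<longleftrightarrow> (\<forall>a. \<bar>real_of_int (rnd a) - a\<bar> \<le> 1/2)"

end

theory Submission
  imports Defs
begin

(* Both polynomials are Bernstein sums \<Sum>k\<le>n. a k * Bernstein n k x with
   a k = r (f (k/n) * (n choose k)) / (n choose k) for a rounding r, and the derivative
   n * \<Sum>k<n. (a (k+1) - a k) * Bernstein (n-1) k x shows that monotone coefficients give a
   monotone polynomial on [0,1]. Rounding moves a k by at most a window of width 1 / (n choose k),
   which is at most 1/n because n choose k \<ge> n for 0 < k < n, while a 0 = f 0 and a n = f 1 are
   exact as f 0, f 1 are integers. If f x - x increases, consecutive grid values satisfy
   f ((k+1)/n) \<ge> f (k/n) + 1/n, which is exactly enough to absorb that window. *)

lemma has_real_derivative_Bernstein_0: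
  "(Bernstein (Suc m) 0 has_real_derivative - real (Suc m) * Bernstein m 0 x) (at x)"
  unfolding Bernstein_def[abs_def]
  by (rule derivative_eq_intros refl | simp)+ (simp add: algebra_simps)

lemma has_real_derivative_Bernstein_Suc:
  "(Bernstein (Suc m) (Suc k) has_real_derivative
     real (Suc m) * (Bernstein m k x - Bernstein m (Suc k) x)) (at x)"
proof -
  define c where "c = real (Suc m choose Suc k)"
  have "(Bernstein (Suc m) (Suc k) has_real_derivative
     c * (real (Suc k) * x ^ k * (1 - x) ^ (m - k) - real (m - k) * x ^ Suc k * (1 - x) ^ (m - Suc k))) (at x)"
    unfolding Bernstein_def[abs_def] c_def
    by (rule derivative_eq_intros refl | simp del: binomial_Suc_Suc)+ (simp add: algebra_simps)
  also have "c * (real (Suc k) * x ^ k * (1 - x) ^ (m - k) - real (m - k) * x ^ Suc k * (1 - x) ^ (m - Suc k))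
    = (real (Suc k) * c) * (x ^ k * (1 - x) ^ (m - k)) - (real (m - k) * c) * (x ^ Suc k * (1 - x) ^ (m - Suc k))"
    by (simp only: right_diff_distrib mult_ac)
  also have "real (Suc k) * c = real (Suc m) * real (m choose k)"
    unfolding c_def by (metis binomial_absorption diff_Suc_1 of_nat_mult)
  also have "real (m - k) * c = real (Suc m) * real (m choose Suc k)"
    unfolding c_def by (metis binomial_absorb_comp diff_Suc_1 diff_Suc_Suc of_nat_mult)
  also have "real (Suc m) * real (m choose k) * (x ^ k * (1 - x) ^ (m - k))
      - real (Suc m) * real (m choose Suc k) * (x ^ Suc k * (1 - x) ^ (m - Suc k))
    = real (Suc m) * (Bernstein m k x - Bernstein m (Suc k) x)"
    by (simp add: Bernstein_def algebra_simps)
  finally show ?thesis .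
qed

lemma has_real_derivative_Bernstein_sum:
  "((\<lambda>x. \<Sum>k\<le>Suc m. a k * Bernstein (Suc m) k x) has_real_derivative
     real (Suc m) * (\<Sum>k\<le>m. (a (Suc k) - a k) * Bernstein m k x)) (at x)"
proof -
  have shift: "(\<Sum>k\<le>m. a k * Bernstein m k x) = a 0 * Bernstein m 0 x + (\<Sum>k\<le>m. a (Suc k) * Bernstein m (Suc k) x)"
  proof -
    have "(\<Sum>k\<le>Suc m. a k * Bernstein m k x) = (\<Sum>k\<le>m. a k * Bernstein m k x)"
      by (simp add: Bernstein_def)
    then show ?thesis
      by (simp only: sum.atMost_Suc_shift)
  qed
  have "((\<lambda>x. a 0 * Bernstein (Suc m) 0 x + (\<Sum>k\<le>m. a (Suc k) * Bernstein (Suc m) (Suc k) x))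
      has_real_derivative a 0 * (- real (Suc m) * Bernstein m 0 x)
        + (\<Sum>k\<le>m. a (Suc k) * (real (Suc m) * (Bernstein m k x - Bernstein m (Suc k) x)))) (at x)"
    by (intro DERIV_add DERIV_cmult DERIV_sum has_real_derivative_Bernstein_0 has_real_derivative_Bernstein_Suc)
  also have "a 0 * (- real (Suc m) * Bernstein m 0 x)
        + (\<Sum>k\<le>m. a (Suc k) * (real (Suc m) * (Bernstein m k x - Bernstein m (Suc k) x)))
    = real (Suc m) * ((\<Sum>k\<le>m. a (Suc k) * Bernstein m k x)
        - (a 0 * Bernstein m 0 x + (\<Sum>k\<le>m. a (Suc k) * Bernstein m (Suc k) x)))"
    by (simp add: sum_distrib_left sum_subtractf algebra_simps)
  also have "\<dots> = real (Suc m) * (\<Sum>k\<le>m. (a (Suc k) - a k) * Bernstein m k x)"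
    by (simp only: shift [symmetric] sum_subtractf left_diff_distrib)
  finally show ?thesis
    by (simp only: sum.atMost_Suc_shift)
qed

lemma mono_on_Bernstein_sum:
  assumes "\<And>k. k < n \<Longrightarrow> a k \<le> a (Suc k)"
  shows "mono_on {0..1} (\<lambda>x. \<Sum>k\<le>n. a k * Bernstein n k x)"
proof (cases n)
  case 0
  then show ?thesis
    by (simp add: Bernstein_def monotone_on_def)
next
  case (Suc m)
  have deriv_nonneg: "0 \<le> real (Suc m) * (\<Sum>k\<le>m. (a (Suc k) - a k) * Bernstein m k x)" if "0 \<le> x" "x \<le> 1" for x
  proof -
    have "0 \<le> (\<Sum>k\<le>m. (a (Suc k) - a k) * Bernstein m k x)"
    proof (rule sum_nonneg)
      fix k assume "k \<in> {..m}"
      then show "0 \<le> (a (Suc k) - a k) * Bernstein m k x"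
        using assms[of k] \<open>n = Suc m\<close> Bernstein_nonneg[OF that] by simp
    qed
    then show ?thesis
      by simp
  qed
  show ?thesis
    unfolding Suc
  proof (rule mono_onI)
    fix r s :: real assume "r \<in> {0..1}" "s \<in> {0..1}" "r \<le> s"
    show "(\<Sum>k\<le>Suc m. a k * Bernstein (Suc m) k r) \<le> (\<Sum>k\<le>Suc m. a k * Bernstein (Suc m) k s)"
    proof (rule DERIV_nonneg_imp_nondecreasing[OF \<open>r \<le> s\<close>])
      fix x assume "r \<le> x" "x \<le> s"
      with \<open>r \<in> {0..1}\<close> \<open>s \<in> {0..1}\<close> have "0 \<le> x" "x \<le> 1"
        by auto
      then show "\<exists>y. ((\<lambda>x. \<Sum>k\<le>Suc m. a k * Bernstein (Suc m) k x) has_real_derivative y) (at x) \<and> 0 \<le> y"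
        using has_real_derivative_Bernstein_sum deriv_nonneg by blast
    qed
  qed
qed

lemma antimono_on_Bernstein_sum:
  assumes "\<And>k. k < n \<Longrightarrow> a (Suc k) \<le> a k"
  shows "antimono_on {0..1} (\<lambda>x. \<Sum>k\<le>n. a k * Bernstein n k x)"
proof -
  have "mono_on {0..1} (\<lambda>x. \<Sum>k\<le>n. - a k * Bernstein n k x)"
    using assms by (intro mono_on_Bernstein_sum) auto
  then show ?thesis
    by (simp add: monotone_on_def sum_negf)
qed

text \<open>Floor is the case d = 0, nearest-integer rounding the case d = 1/2.\<close>
definition integer_rounding :: "(real \<Rightarrow> int) \<Rightarrow> real \<Rightarrow> bool" where
  "integer_rounding r d \<longleftrightarrow>
     (\<forall>m. r (of_int m) = m) \<and> (\<forall>y. y - 1 + d \<le> of_int (r y) \<and> of_int (r y) \<le> y + d)"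

lemma integer_rounding_floor: "integer_rounding floor 0"
  unfolding integer_rounding_def by linarith

lemma integer_rounding_nearest:
  assumes "nearest_int_rounding rnd"
  shows "integer_rounding rnd (1/2)"
proof -
  have "rnd (of_int m) = m" for m
  proof -
    have "\<bar>real_of_int (rnd (of_int m) - m)\<bar> \<le> 1/2"
      using assms unfolding nearest_int_rounding_def by simp
    then show ?thesis
      by linarith
  qed
  moreover have "y - 1 + 1/2 \<le> of_int (rnd y) \<and> of_int (rnd y) \<le> y + 1/2" for y
  proof -
    have "\<bar>of_int (rnd y) - y\<bar> \<le> 1/2"
      using assms unfolding nearest_int_rounding_def by blast
    then show ?thesis
      unfolding abs_le_iff by linarith
  qed
  ultimately show ?thesis
    unfolding integer_rounding_def by blast
qed

lemma integer_rounding_offset_bounds: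
  assumes "integer_rounding r d"
  shows "0 \<le> d" "d \<le> 1"
proof -
  have "r 0 = 0"
    using assms unfolding integer_rounding_def by (metis of_int_0)
  moreover have "0 - 1 + d \<le> of_int (r 0)" "of_int (r 0) \<le> 0 + d"
    using assms unfolding integer_rounding_def by blast+
  ultimately show "0 \<le> d" "d \<le> 1"
    by simp_all
qed

lemma integer_rounding_quotient_bounds:
  fixes c n :: real
  assumes "integer_rounding r d" "0 < n" "n \<le> c"
  shows "y - (1 - d) / n \<le> of_int (r (y * c)) / c" "of_int (r (y * c)) / c \<le> y + d / n"
proof -
  have "0 < c"
    using assms(2,3) by linarith
  have r: "y * c - 1 + d \<le> of_int (r (y * c))" "of_int (r (y * c)) \<le> y * c + d"
    using assms(1) unfolding integer_rounding_def by blast+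
  have "y - (1 - d) / n \<le> y - (1 - d) / c"
    using integer_rounding_offset_bounds[OF assms(1)] assms(2,3) by (simp add: frac_le)
  also have "\<dots> = (y * c - 1 + d) / c"
    using \<open>0 < c\<close> by (simp add: field_simps)
  also have "\<dots> \<le> of_int (r (y * c)) / c"
    using r(1) \<open>0 < c\<close> by (simp add: divide_right_mono)
  finally show "y - (1 - d) / n \<le> of_int (r (y * c)) / c" .
  have "of_int (r (y * c)) / c \<le> (y * c + d) / c"
    using r(2) \<open>0 < c\<close> by (simp add: divide_right_mono)
  also have "\<dots> = y + d / c"
    using \<open>0 < c\<close> by (simp add: field_simps)
  also have "\<dots> \<le> y + d / n"
    using integer_rounding_offset_bounds[OF assms(1)] assms(2,3) by (simp add: frac_le)
  finally show "of_int (r (y * c)) / c \<le> y + d / n" .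
qed

definition rounded_Bernstein :: "(real \<Rightarrow> int) \<Rightarrow> nat \<Rightarrow> (real \<Rightarrow> real) \<Rightarrow> real \<Rightarrow> real" where
  "rounded_Bernstein r n f x =
     (\<Sum>k\<le>n. of_int (r (f (real k / real n) * real (n choose k))) * x ^ k * (1 - x) ^ (n - k))"

lemma Btilde_eq_rounded_Bernstein: "Btilde n f = rounded_Bernstein floor n f"
  by (simp add: fun_eq_iff Btilde_def rounded_Bernstein_def)

lemma Bhat_eq_rounded_Bernstein: "Bhat = rounded_Bernstein"
  by (simp add: fun_eq_iff Bhat_def rounded_Bernstein_def)

lemma rounded_Bernstein_eq_Bernstein_sum:
  "rounded_Bernstein r n f = (\<lambda>x. \<Sum>k\<le>n.
     of_int (r (f (real k / real n) * real (n choose k))) / real (n choose k) * Bernstein n k x)"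
  by (auto simp: fun_eq_iff rounded_Bernstein_def Bernstein_def intro!: sum.cong)

lemma rounded_Bernstein_coefficient_bounds:
  assumes r: "integer_rounding r d" and f: "f 0 \<in> \<int>" "f 1 \<in> \<int>" and "1 \<le> n" "k \<le> n"
  shows "f (real k / real n) - (1 - d) / real n
           \<le> of_int (r (f (real k / real n) * real (n choose k))) / real (n choose k)"
    and "of_int (r (f (real k / real n) * real (n choose k))) / real (n choose k)
           \<le> f (real k / real n) + d / real n"
proof -
  let ?y = "f (real k / real n)" and ?c = "real (n choose k)"
  have "?y - (1 - d) / real n \<le> of_int (r (?y * ?c)) / ?c \<and> of_int (r (?y * ?c)) / ?c \<le> ?y + d / real n"
  proof (cases "k = 0 \<or> k = n")
    case True
    then have "?c = 1" "?y \<in> \<int>"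
      using f \<open>1 \<le> n\<close> by auto
    then have "of_int (r (?y * ?c)) / ?c = ?y"
      using r unfolding integer_rounding_def by (auto elim: Ints_cases)
    then show ?thesis
      using integer_rounding_offset_bounds[OF r] by simp
  next
    case False
    then have "real n \<le> ?c"
      using upper_le_binomial \<open>k \<le> n\<close> by simp
    then show ?thesis
      using integer_rounding_quotient_bounds[OF r] \<open>1 \<le> n\<close> by simp
  qed
  then show "?y - (1 - d) / real n \<le> of_int (r (?y * ?c)) / ?c" "of_int (r (?y * ?c)) / ?c \<le> ?y + d / real n"
    by simp_all
qed

lemma mono_on_minus_id_grid_step:
  fixes f :: "real \<Rightarrow> real"
  assumes "mono_on {0..1} (\<lambda>x. f x - x)" "k < n"
  shows "f (real k / real n) + 1 / real n \<le> f (real (Suc k) / real n)"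
proof -
  have "f (real k / real n) - real k / real n \<le> f (real (Suc k) / real n) - real (Suc k) / real n"
    using assms by (intro mono_onD[OF assms(1)]) (auto simp: divide_right_mono)
  then show ?thesis
    by (simp add: add_divide_distrib)
qed

lemma antimono_on_plus_id_grid_step:
  fixes f :: "real \<Rightarrow> real"
  assumes "antimono_on {0..1} (\<lambda>x. f x + x)" "k < n"
  shows "f (real (Suc k) / real n) + 1 / real n \<le> f (real k / real n)"
proof -
  have "f (real (Suc k) / real n) + real (Suc k) / real n \<le> f (real k / real n) + real k / real n"
    using assms by (intro monotone_onD[OF assms(1)]) (auto simp: divide_right_mono)
  then show ?thesis
    by (simp add: add_divide_distrib)
qed

lemma mono_on_rounded_Bernstein:
  assumes r: "integer_rounding r d" and f: "f 0 \<in> \<int>" "f 1 \<in> \<int>" and n: "1 \<le> n"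
    and mono: "mono_on {0..1} (\<lambda>x. f x - x)"
  shows "mono_on {0..1} (rounded_Bernstein r n f)"
  unfolding rounded_Bernstein_eq_Bernstein_sum
proof (rule mono_on_Bernstein_sum)
  fix k assume "k < n"
  have "(1 - d) / real n = 1 / real n - d / real n"
    by (simp add: diff_divide_distrib)
  then show "of_int (r (f (real k / real n) * real (n choose k))) / real (n choose k)
      \<le> of_int (r (f (real (Suc k) / real n) * real (n choose Suc k))) / real (n choose Suc k)"
    using rounded_Bernstein_coefficient_bounds[OF r f n, of k] rounded_Bernstein_coefficient_bounds[OF r f n, of "Suc k"]
      mono_on_minus_id_grid_step[OF mono \<open>k < n\<close>] \<open>k < n\<close>
    by linarith
qed

lemma antimono_on_rounded_Bernstein:
  assumes r: "integer_rounding r d" and f: "f 0 \<in> \<int>" "f 1 \<in> \<int>" and n: "1 \<le> n"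
    and antimono: "antimono_on {0..1} (\<lambda>x. f x + x)"
  shows "antimono_on {0..1} (rounded_Bernstein r n f)"
  unfolding rounded_Bernstein_eq_Bernstein_sum
proof (rule antimono_on_Bernstein_sum)
  fix k assume "k < n"
  have "(1 - d) / real n = 1 / real n - d / real n"
    by (simp add: diff_divide_distrib)
  then show "of_int (r (f (real (Suc k) / real n) * real (n choose Suc k))) / real (n choose Suc k)
      \<le> of_int (r (f (real k / real n) * real (n choose k))) / real (n choose k)"
    using rounded_Bernstein_coefficient_bounds[OF r f n, of k] rounded_Bernstein_coefficient_bounds[OF r f n, of "Suc k"]
      antimono_on_plus_id_grid_step[OF antimono \<open>k < n\<close>] \<open>k < n\<close>
    by linarith
qed

theorem theorem1p7:
  fixes f :: "real \<Rightarrow> real" and rnd :: "real \<Rightarrow> int"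
  assumes f0: "f 0 \<in> \<int>" and f1: "f 1 \<in> \<int>"
    and rnd: "nearest_int_rounding rnd"
  shows "(mono_on {0..1} (\<lambda>x. f x - x) \<longrightarrow>
            (\<forall>n\<ge>1. mono_on {0..1} (Btilde n f) \<and> mono_on {0..1} (Bhat rnd n f)))
       \<and> (antimono_on {0..1} (\<lambda>x. f x + x) \<longrightarrow>
            (\<forall>n\<ge>1. antimono_on {0..1} (Btilde n f) \<and> antimono_on {0..1} (Bhat rnd n f)))"
  unfolding Btilde_eq_rounded_Bernstein Bhat_eq_rounded_Bernstein
  using mono_on_rounded_Bernstein[OF integer_rounding_floor f0 f1]
    mono_on_rounded_Bernstein[OF integer_rounding_nearest[OF rnd] f0 f1]
    antimono_on_rounded_Bernstein[OF integer_rounding_floor f0 f1]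
    antimono_on_rounded_Bernstein[OF integer_rounding_nearest[OF rnd] f0 f1]
  by blast

end
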